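(* The thresholding algorithm with $t$ thresholds cannot achieve an approximation factor better than $1-\left(1-\frac{1}{t+1}\right)^t$. Precisely: let $t\ge1$ be an integer and $\varepsilon>0$. Then there is $k_0$ such that for every integer $k\ge k_0$ and all reals $c_1\ge c_2\ge\dots\ge c_t>0$, there exist a finite ground set $V$, a monotone submodular $f:2^V\to\mathbb{R}_{\ge0}$ with $OPT:=\max_{A\subseteq V,|A|\le k}f(A)>0$, and an execution of the thresholding algorithm with thresholds $\alpha_\ell=c_\ell\,\frac{OPT}{k}$ ($1\le \ell\le t$) whose output $G$ satisfies $f(G)\le\left(1-\left(1-\frac{1}{t+1}\right)^t+\varepsilon\right)OPT$.
   Context: A function $f:2^V\to\mathbb{R}_{\ge0}$ is submodular if $f(A\cup\{e\})-f(A)\ge f(B\cup\{e\})-f(B)$ for all $A\subseteq B\subseteq V$ and $e\notin B$, and monotone if $f(A\cup\{e\})-f(A)\ge 0$ for all $A$ and $e\notin A$. Write $f_A(e)=f(A\cup\{e\})-f(A)$. The thresholding algorithm with cardinality bound $k$ and thresholds $\alpha_1\ge\alpha_2\ge\dots\ge\alpha_t>0$ (which may be chosen with knowledge of $OPT$ and $k$): start with $G=\emptyset$; for $\ell=1,\dots,t$ in turn, as long as $|G|<k$ and some $e\in V\setminus G$ has $f_G(e)\ge\alpha_\ell$, add one such element $e$ to $G$ (the choice among eligible elements, i.e. the processing order, is arbitrary); when no such element exists or $|G|=k$, move to the next threshold. Output $G$. An execution is any run consistent with these rules. *)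

theory Defs
  imports Complex_Main
begin

definition marg :: "('a set \<Rightarrow> real) \<Rightarrow> 'a set \<Rightarrow> 'a \<Rightarrow> real" where
  "marg f A e = f (A \<union> {e}) - f A"

definition nonneg_set_fun :: "'a set \<Rightarrow> ('a set \<Rightarrow> real) \<Rightarrow> bool" where
  "nonneg_set_fun V f \<longleftrightarrow> (\<forall>A. A \<subseteq> V \<longrightarrow> f A \<ge> 0)"

definition submodular :: "'a set \<Rightarrow> ('a set \<Rightarrow> real) \<Rightarrow> bool" where
  "submodular V f \<longleftrightarrow>
     (\<forall>A B e. A \<subseteq> B \<and> B \<subseteq> V \<and> e \<in> V \<and> e \<notin> B \<longrightarrow> marg f A e \<ge> marg f B e)"

definition monotone_sf :: "'a set \<Rightarrow> ('a set \<Rightarrow> real) \<Rightarrow> bool" where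
  "monotone_sf V f \<longleftrightarrow> (\<forall>A e. A \<subseteq> V \<and> e \<in> V \<and> e \<notin> A \<longrightarrow> marg f A e \<ge> 0)"

definition opt_val :: "'a set \<Rightarrow> ('a set \<Rightarrow> real) \<Rightarrow> nat \<Rightarrow> real" where
  "opt_val V f k = Max (f ` {A. A \<subseteq> V \<and> card A \<le> k})"

text \<open>States of the thresholding algorithm: (current threshold index l, current set G).
  Thresholds are alpha 1, ..., alpha t; index t+1 means termination.\<close>
inductive thr_step :: "'a set \<Rightarrow> ('a set \<Rightarrow> real) \<Rightarrow> nat \<Rightarrow> nat \<Rightarrow> (nat \<Rightarrow> real)
    \<Rightarrow> nat \<times> 'a set \<Rightarrow> nat \<times> 'a set \<Rightarrow> bool"
  for V f k t alpha where
  add: "\<lbrakk>1 \<le> l; l \<le> t; card G < k; e \<in> V - G; marg f G e \<ge> alpha l\<rbrakk>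
        \<Longrightarrow> thr_step V f k t alpha (l, G) (l, insert e G)"
| advance: "\<lbrakk>1 \<le> l; l \<le> t; \<not> (card G < k \<and> (\<exists>e\<in>V - G. marg f G e \<ge> alpha l))\<rbrakk>
        \<Longrightarrow> thr_step V f k t alpha (l, G) (Suc l, G)"

definition thr_output :: "'a set \<Rightarrow> ('a set \<Rightarrow> real) \<Rightarrow> nat \<Rightarrow> nat \<Rightarrow> (nat \<Rightarrow> real)
    \<Rightarrow> 'a set \<Rightarrow> bool" where
  "thr_output V f k t alpha G \<longleftrightarrow> (thr_step V f k t alpha)\<^sup>*\<^sup>* (1, {}) (Suc t, G)"

end

theory Submission
  imports Defs "HOL-Analysis.Convex" "HOL-Real_Asymp.Real_Asymp"
begin

(* The hard instance has k optimal elements P and decoys D with weights w, and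
   f S = 1 - (1 - |S \<inter> P| / k) (1 - w (S \<inter> D)).  Thus OPT = f P = 1, an optimal element
   adds (1 - w (S \<inter> D)) / k, and a decoy adds its weight as long as S misses P.
   In phase l the execution takes just enough decoys of weight c l / k to push the gain of the
   optimal elements below the threshold c l / k; every decoy of a later phase is lighter than
   c l / k, so no optimal element is ever taken and the output is the set of all decoys.
   A phase taking n decoys shrinks the slack 1 - w by a factor of at most 1 + n / (k - 1);
   since at most k decoys are taken, AM-GM bounds the output value by
   1 - (1 + k / ((k - 1) t))^-t, which tends to 1 - (1 - 1 / (t + 1))^t as k grows. *)

lemma prod_le_mean_power:
  fixes x :: "'a \<Rightarrow> real"
  assumes "finite I" and "\<And>i. i \<in> I \<Longrightarrow> 0 \<le> x i"
  shows "(\<Prod>i\<in>I. x i) \<le> (sum x I / card I) ^ card I"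
proof (cases "I = {}")
  case False
  let ?n = "card I"
  have n: "0 < ?n" using False assms(1) by (simp add: card_gt_0_iff)
  have prod_nonneg: "0 \<le> (\<Prod>i\<in>I. x i)" using assms(2) by (rule prod_nonneg)
  have "(\<Prod>i\<in>I. x i) powr (1 / ?n) \<le> sum x I / ?n"
    using arith_geom_mean[OF assms(1) False assms(2)] by (simp add: sum_divide_distrib)
  then have "((\<Prod>i\<in>I. x i) powr (1 / ?n)) ^ ?n \<le> (sum x I / ?n) ^ ?n"
    by (rule power_mono) simp
  also have "((\<Prod>i\<in>I. x i) powr (1 / ?n)) ^ ?n = (\<Prod>i\<in>I. x i)"
    using prod_nonneg n by (simp add: root_powr_inverse[symmetric])
  finally show ?thesis .
qed simp

lemma rtranclp_chain:
  assumes "m \<le> n" and "\<And>i. m \<le> i \<Longrightarrow> i < n \<Longrightarrow> R (s i) (s (Suc i))"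
  shows "R\<^sup>*\<^sup>* (s m) (s n)"
  using assms
proof (induction n rule: dec_induct)
  case (step i)
  then show ?case by (meson less_Suc_eq rtranclp.rtrancl_into_rtrancl)
qed simp

definition decoy_fun :: "'a set \<Rightarrow> 'a set \<Rightarrow> ('a \<Rightarrow> real) \<Rightarrow> 'a set \<Rightarrow> real" where
  "decoy_fun P D w S = 1 - (1 - real (card (S \<inter> P)) / real (card P)) * (1 - sum w (S \<inter> D))"

locale decoy_instance =
  fixes P D :: "'a set" and w :: "'a \<Rightarrow> real"
  assumes finite_P: "finite P" and P_nonempty: "P \<noteq> {}" and finite_D: "finite D"
    and disjoint: "P \<inter> D = {}"
    and w_nonneg: "\<And>e. e \<in> D \<Longrightarrow> 0 \<le> w e" and sum_w_le_1: "sum w D \<le> 1"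
begin

abbreviation f where "f \<equiv> decoy_fun P D w"

lemma card_P_pos: "0 < card P"
  using finite_P P_nonempty by (simp add: card_gt_0_iff)

lemma weight_bounds: "0 \<le> sum w (S \<inter> D)" "sum w (S \<inter> D) \<le> 1"
proof -
  show "0 \<le> sum w (S \<inter> D)" using w_nonneg by (intro sum_nonneg) auto
  have "sum w (S \<inter> D) \<le> sum w D" using finite_D w_nonneg by (intro sum_mono2) auto
  then show "sum w (S \<inter> D) \<le> 1" using sum_w_le_1 by linarith
qed

lemma fraction_bounds: "0 \<le> real (card (S \<inter> P)) / card P" "real (card (S \<inter> P)) / card P \<le> 1"
  using card_P_pos card_mono[OF finite_P, of "S \<inter> P"] by auto

lemma marg_opt:
  assumes "e \<in> P" and "e \<notin> S"
  shows "marg f S e = (1 - sum w (S \<inter> D)) / card P"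
proof -
  have "card ((S \<union> {e}) \<inter> P) = Suc (card (S \<inter> P))"
    using assms finite_P by (simp add: Int_insert_left)
  moreover have "(S \<union> {e}) \<inter> D = S \<inter> D" using assms disjoint by auto
  ultimately show ?thesis
    using card_P_pos by (simp add: marg_def decoy_fun_def field_simps)
qed

lemma marg_decoy:
  assumes "e \<in> D" and "e \<notin> S"
  shows "marg f S e = (1 - real (card (S \<inter> P)) / card P) * w e"
proof -
  have "(S \<union> {e}) \<inter> P = S \<inter> P" using assms disjoint by auto
  moreover have "sum w ((S \<union> {e}) \<inter> D) = w e + sum w (S \<inter> D)"
    using assms finite_D by (simp add: Int_insert_left)
  ultimately show ?thesis using card_P_pos by (simp add: marg_def decoy_fun_def field_simps)
qed

lemma nonneg: "nonneg_set_fun (P \<union> D) f"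
  unfolding nonneg_set_fun_def decoy_fun_def
  using fraction_bounds weight_bounds by (simp add: mult_le_one)

lemma monotone: "monotone_sf (P \<union> D) f"
  unfolding monotone_sf_def
  using fraction_bounds weight_bounds w_nonneg marg_opt marg_decoy by auto

lemma submodular: "submodular (P \<union> D) f"
  unfolding submodular_def
proof (intro allI impI)
  fix A B e
  assume "A \<subseteq> B \<and> B \<subseteq> P \<union> D \<and> e \<in> P \<union> D \<and> e \<notin> B"
  then have AB: "A \<subseteq> B" and e: "e \<in> P \<union> D" "e \<notin> B" "e \<notin> A" by auto
  show "marg f B e \<le> marg f A e"
  proof (cases "e \<in> P")
    case True
    have "sum w (A \<inter> D) \<le> sum w (B \<inter> D)"
      using AB finite_D w_nonneg by (intro sum_mono2) auto
    then show ?thesis using True e by (simp add: marg_opt divide_right_mono)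
  next
    case False
    have "card (A \<inter> P) \<le> card (B \<inter> P)" using AB finite_P by (intro card_mono) auto
    then show ?thesis using False e w_nonneg
      by (simp add: marg_decoy mult_right_mono divide_right_mono)
  qed
qed

lemma opt_val_eq_1: "opt_val (P \<union> D) f (card P) = 1"
  unfolding opt_val_def
proof (rule Max_eqI)
  show "finite (f ` {A. A \<subseteq> P \<union> D \<and> card A \<le> card P})"
    using finite_P finite_D by simp
  show "y \<le> 1" if "y \<in> f ` {A. A \<subseteq> P \<union> D \<and> card A \<le> card P}" for y
    using that fraction_bounds weight_bounds by (auto simp: decoy_fun_def)
  have "f P = 1" using card_P_pos by (simp add: decoy_fun_def)
  then show "1 \<in> f ` {A. A \<subseteq> P \<union> D \<and> card A \<le> card P}" by force
qed

end

locale threshold_schedule =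
  fixes c :: "nat \<Rightarrow> real" and k t :: nat
  assumes k_ge_2: "2 \<le> k" and c_pos: "\<And>l. 1 \<le> l \<Longrightarrow> l \<le> t \<Longrightarrow> 0 < c l"
begin

(* The fewest further decoys of weight \<gamma> / k after which the budget k is exhausted or the
   decoy weight x exceeds 1 - \<gamma>, i.e. the optimal elements gain less than \<gamma> / k. *)
definition batch :: "nat \<Rightarrow> real \<Rightarrow> real \<Rightarrow> nat" where
  "batch p x \<gamma> = (LEAST n. k \<le> p + n \<or> 1 - \<gamma> < x + real n * \<gamma> / real k)"

lemma batch_within_budget: "p \<le> k \<Longrightarrow> p + batch p x \<gamma> \<le> k"
  using Least_le[of "\<lambda>n. k \<le> p + n \<or> 1 - \<gamma> < x + real n * \<gamma> / real k" "k - p"]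
  by (simp add: batch_def)

lemma batch_blocks: "p + batch p x \<gamma> < k \<Longrightarrow> 1 - \<gamma> < x + real (batch p x \<gamma>) * \<gamma> / real k"
  using LeastI[of "\<lambda>n. k \<le> p + n \<or> 1 - \<gamma> < x + real n * \<gamma> / real k" k]
  by (simp add: batch_def)

lemma batch_minimal:
  assumes "0 < batch p x \<gamma>"
  shows "x + real (batch p x \<gamma>) * \<gamma> / real k - \<gamma> / real k \<le> 1 - \<gamma>"
proof -
  have "\<not> (k \<le> p + (batch p x \<gamma> - 1) \<or> 1 - \<gamma> < x + real (batch p x \<gamma> - 1) * \<gamma> / real k)"
    using assms unfolding batch_def by (intro not_less_Least) simp
  then show ?thesis using assms by (simp add: of_nat_diff diff_divide_distrib left_diff_distrib)
qed

fun phase_size :: "nat \<Rightarrow> nat" and taken :: "nat \<Rightarrow> nat" and taken_weight :: "nat \<Rightarrow> real" where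
  "phase_size 0 = 0"
| "phase_size (Suc l) = batch (taken l) (taken_weight l) (c (Suc l))"
| "taken 0 = 0"
| "taken (Suc l) = taken l + phase_size (Suc l)"
| "taken_weight 0 = 0"
| "taken_weight (Suc l) = taken_weight l + real (phase_size (Suc l)) * c (Suc l) / real k"

declare phase_size.simps(2) [simp del] taken.simps(2) [simp del] taken_weight.simps(2) [simp del]

lemma taken_le_k: "taken l \<le> k"
  by (induction l) (simp_all add: taken.simps phase_size.simps batch_within_budget)

lemma taken_mono: "l \<le> l' \<Longrightarrow> taken l \<le> taken l'"
  by (induction l' rule: dec_induct) (auto simp: taken.simps)

lemma taken_weight_mono: "l \<le> l' \<Longrightarrow> l' \<le> t \<Longrightarrow> taken_weight l \<le> taken_weight l'"
proof (induction l' rule: dec_induct)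
  case (step m)
  then have "0 \<le> real (phase_size (Suc m)) * c (Suc m) / real k"
    using c_pos[of "Suc m"] by simp
  with step show ?case by (simp add: taken_weight.simps)
qed simp

lemma weight_blocks_phase:
  "taken (Suc l) < k \<Longrightarrow> 1 - c (Suc l) < taken_weight (Suc l)"
  using batch_blocks by (simp add: taken.simps taken_weight.simps phase_size.simps)

lemma weight_at_nonempty_phase:
  "0 < phase_size (Suc l) \<Longrightarrow> taken_weight (Suc l) - c (Suc l) / real k \<le> 1 - c (Suc l)"
  using batch_minimal by (simp add: taken_weight.simps phase_size.simps)

lemma taken_weight_le_1: "l \<le> t \<Longrightarrow> taken_weight l \<le> 1"
proof (induction l)
  case (Suc l)
  show ?case
  proof (cases "phase_size (Suc l) = 0")
    case False
    have "c (Suc l) / real k \<le> c (Suc l)"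
      using c_pos[of "Suc l"] Suc.prems k_ge_2 by (simp add: divide_le_eq)
    then show ?thesis using weight_at_nonempty_phase[of l] False by linarith
  qed (use Suc in \<open>simp add: taken_weight.simps\<close>)
qed simp

lemma sum_phase_size: "(\<Sum>i = 1..l. phase_size i) = taken l"
  by (induction l) (simp_all add: taken.simps)

lemma slack_step:
  assumes "Suc l \<le> t"
  shows "1 - taken_weight l \<le> (1 - taken_weight (Suc l)) * (1 + phase_size (Suc l) / (real k - 1))"
proof (cases "phase_size (Suc l) = 0")
  case False
  let ?c = "c (Suc l)" and ?n = "real (phase_size (Suc l))" and ?x = "taken_weight (Suc l)"
  have "?c * (real k - 1) / real k = ?c - ?c / real k"
    using k_ge_2 by (simp add: field_simps)
  then have "?c * (real k - 1) / real k \<le> 1 - ?x"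
    using weight_at_nonempty_phase[of l] False by linarith
  then have "?c * (real k - 1) / real k * (?n / (real k - 1)) \<le> (1 - ?x) * (?n / (real k - 1))"
    using k_ge_2 by (intro mult_right_mono) simp_all
  moreover have "?c * (real k - 1) / real k * (?n / (real k - 1)) = ?n * ?c / real k"
    using k_ge_2 by (simp add: field_simps)
  moreover have "(1 - ?x) * (1 + ?n / (real k - 1)) = (1 - ?x) + (1 - ?x) * (?n / (real k - 1))"
    by (simp add: distrib_left)
  moreover have "?x = taken_weight l + ?n * ?c / real k" by (simp add: taken_weight.simps)
  ultimately show ?thesis by linarith
qed (simp add: taken_weight.simps)

lemma slack_times_prod_ge_1:
  "l \<le> t \<Longrightarrow> 1 \<le> (1 - taken_weight l) * (\<Prod>i = 1..l. 1 + phase_size i / (real k - 1))"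
proof (induction l)
  case (Suc l)
  have "0 \<le> (\<Prod>i = 1..l. 1 + phase_size i / (real k - 1))"
    using k_ge_2 by (intro prod_nonneg) simp
  then have "(1 - taken_weight l) * (\<Prod>i = 1..l. 1 + phase_size i / (real k - 1))
      \<le> (1 - taken_weight (Suc l)) * (1 + phase_size (Suc l) / (real k - 1))
        * (\<Prod>i = 1..l. 1 + phase_size i / (real k - 1))"
    using slack_step[OF Suc.prems] by (rule mult_right_mono[rotated])
  with Suc show ?case by (simp add: prod.nat_ivl_Suc' ac_simps)
qed simp

lemma taken_weight_bound: "taken_weight t \<le> 1 - 1 / (1 + real k / ((real k - 1) * t)) ^ t"
proof (cases "t = 0")
  case False
  define a where "a i = real (phase_size i) / (real k - 1)" for i
  have a_nonneg: "0 \<le> a i" for i using k_ge_2 by (simp add: a_def)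
  have "sum a {1..t} = real (taken t) / (real k - 1)"
    by (simp add: a_def sum_divide_distrib flip: sum_phase_size)
  also have "\<dots> \<le> real k / (real k - 1)"
    using taken_le_k[of t] k_ge_2 by (simp add: divide_right_mono)
  finally have sum_a: "sum a {1..t} \<le> real k / (real k - 1)" .
  have "(\<Prod>i = 1..t. 1 + a i) \<le> ((\<Sum>i = 1..t. 1 + a i) / t) ^ t"
    using prod_le_mean_power[of "{1..t}" "\<lambda>i. 1 + a i"] a_nonneg by simp
  also have "(\<Sum>i = 1..t. 1 + a i) / t = 1 + sum a {1..t} / t"
    using False by (simp add: sum.distrib add_divide_distrib)
  also have "(1 + sum a {1..t} / t) ^ t \<le> (1 + real k / ((real k - 1) * t)) ^ t"
    using sum_a a_nonneg
    by (intro power_mono) (simp_all add: divide_right_mono sum_nonneg flip: divide_divide_eq_left)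
  finally have prod_bound: "(\<Prod>i = 1..t. 1 + a i) \<le> (1 + real k / ((real k - 1) * t)) ^ t" .
  have prod_pos: "0 < (\<Prod>i = 1..t. 1 + a i)"
    using a_nonneg by (intro prod_pos) (simp add: add_pos_nonneg)
  have "1 / (1 + real k / ((real k - 1) * t)) ^ t \<le> 1 / (\<Prod>i = 1..t. 1 + a i)"
    using prod_bound prod_pos by (intro divide_left_mono) simp_all
  also have "\<dots> \<le> 1 - taken_weight t"
    using slack_times_prod_ge_1[of t] prod_pos by (simp add: a_def divide_le_eq)
  finally show ?thesis by linarith
qed simp

lemma phase_containing: "j < taken m \<Longrightarrow> \<exists>l<m. taken l \<le> j \<and> j < taken (Suc l)"
proof (induction m)
  case (Suc m)
  show ?case
  proof (cases "j < taken m")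
    case True
    then show ?thesis using Suc.IH less_SucI by blast
  qed (use Suc.prems in \<open>auto intro: exI[of _ m]\<close>)
qed simp

(* Decoys are numbered in the order in which they are taken. *)
definition phase_of :: "nat \<Rightarrow> nat" where
  "phase_of j = (LEAST l. j < taken l)"

definition decoy_weight :: "nat \<Rightarrow> real" where
  "decoy_weight j = c (phase_of j) / real k"

lemma phase_of_eq: "taken l \<le> j \<Longrightarrow> j < taken (Suc l) \<Longrightarrow> phase_of j = Suc l"
  unfolding phase_of_def
proof (rule Least_equality)
  show "Suc l \<le> m" if "taken l \<le> j" and "j < taken m" for m
    using that taken_mono[of m l] by (cases "Suc l \<le> m") auto
qed

lemma decoy_weight_eq: "taken l \<le> j \<Longrightarrow> j < taken (Suc l) \<Longrightarrow> decoy_weight j = c (Suc l) / real k"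
  by (simp add: decoy_weight_def phase_of_eq)

lemma sum_decoy_weight: "(\<Sum>j<taken l. decoy_weight j) = taken_weight l"
proof (induction l)
  case (Suc l)
  have "(\<Sum>j<taken (Suc l). decoy_weight j)
      = (\<Sum>j<taken l. decoy_weight j) + (\<Sum>j = taken l..<taken (Suc l). decoy_weight j)"
    using taken_mono[of l "Suc l"] by (simp add: lessThan_atLeast0 sum.atLeastLessThan_concat)
  also have "(\<Sum>j = taken l..<taken (Suc l). decoy_weight j)
      = (\<Sum>j = taken l..<taken (Suc l). c (Suc l) / real k)"
    by (intro sum.cong) (simp_all add: decoy_weight_eq)
  finally show ?case using Suc by (simp add: taken.simps taken_weight.simps)
qed simp

lemma decoy_weight_pos: "j < taken t \<Longrightarrow> 0 < decoy_weight j"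
proof -
  assume "j < taken t"
  then obtain l where "l < t" "taken l \<le> j" "j < taken (Suc l)"
    using phase_containing by blast
  then show ?thesis using c_pos[of "Suc l"] k_ge_2 by (simp only: decoy_weight_eq) simp
qed

lemma later_decoys_lighter:
  assumes "taken (Suc l) < k" and "taken (Suc l) \<le> j" and "j < taken t"
  shows "decoy_weight j < c (Suc l) / real k"
proof -
  obtain l' where l': "l' < t" "taken l' \<le> j" "j < taken (Suc l')"
    using phase_containing assms(3) by blast
  have "Suc l \<le> l'"
    using taken_mono[of "Suc l'" "Suc l"] assms(2) l'(3) by (cases "Suc l \<le> l'") auto
  have "0 < phase_size (Suc l')" using l' by (simp add: taken.simps)
  then have "taken_weight (Suc l') - c (Suc l') / real k \<le> 1 - c (Suc l')"
    by (rule weight_at_nonempty_phase)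
  moreover have "c (Suc l') / real k \<le> real (phase_size (Suc l')) * c (Suc l') / real k"
    using \<open>0 < phase_size (Suc l')\<close> c_pos[of "Suc l'"] l'(1) by (simp add: divide_right_mono)
  moreover have "taken_weight (Suc l) \<le> taken_weight l'"
    using \<open>Suc l \<le> l'\<close> l'(1) by (intro taken_weight_mono) auto
  ultimately have "c (Suc l') < c (Suc l)"
    using weight_blocks_phase[OF assms(1)] taken_weight.simps(2)[of l'] by linarith
  then show ?thesis using decoy_weight_eq[OF l'(2,3)] k_ge_2 by (simp add: divide_strict_right_mono)
qed

definition decoys :: "nat set" where "decoys = {..<taken t}"
definition optimum :: "nat set" where "optimum = {taken t..<taken t + k}"
definition hard_fun :: "nat set \<Rightarrow> real" where "hard_fun = decoy_fun optimum decoys decoy_weight"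

lemma card_optimum: "card optimum = k"
  by (simp add: optimum_def)

sublocale hard: decoy_instance optimum decoys decoy_weight
proof
  show "finite optimum" "finite decoys" "optimum \<inter> decoys = {}"
    by (auto simp: optimum_def decoys_def)
  show "optimum \<noteq> {}" using card_optimum k_ge_2 by auto
  show "0 \<le> decoy_weight j" if "j \<in> decoys" for j
    using that decoy_weight_pos by (simp add: decoys_def less_imp_le)
  show "sum decoy_weight decoys \<le> 1"
    using sum_decoy_weight[of t] taken_weight_le_1[of t] by (simp add: decoys_def)
qed

lemma prefix_inter_optimum: "p \<le> taken t \<Longrightarrow> {..<p} \<inter> optimum = {}"
  by (auto simp: optimum_def)

lemma add_step:
  assumes "Suc l \<le> t" and "taken l \<le> p" and "p < taken (Suc l)"
  shows "thr_step (optimum \<union> decoys) hard_fun k t (\<lambda>l. c l / real k) (Suc l, {..<p}) (Suc l, {..<Suc p})"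
proof -
  have "p < taken t" using assms taken_mono[of "Suc l" t] by linarith
  then have "marg hard_fun {..<p} p = c (Suc l) / real k"
    using prefix_inter_optimum[of p] decoy_weight_eq[OF assms(2,3)] hard.marg_decoy[of p "{..<p}"]
    by (simp add: hard_fun_def decoys_def)
  moreover have "card {..<p} < k" using assms(3) taken_le_k[of "Suc l"] by simp
  ultimately have "thr_step (optimum \<union> decoys) hard_fun k t (\<lambda>l. c l / real k)
      (Suc l, {..<p}) (Suc l, insert p {..<p})"
    using assms(1) \<open>p < taken t\<close> by (intro thr_step.add) (auto simp: decoys_def)
  then show ?thesis by (simp add: lessThan_Suc)
qed

lemma advance_step:
  assumes "Suc l \<le> t"
  shows "thr_step (optimum \<union> decoys) hard_fun k t (\<lambda>l. c l / real k)
    (Suc l, {..<taken (Suc l)}) (Suc (Suc l), {..<taken (Suc l)})"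
proof (rule thr_step.advance)
  let ?G = "{..<taken (Suc l)}"
  have taken_le: "taken (Suc l) \<le> taken t" using assms by (rule taken_mono)
  then have G_decoys: "?G \<subseteq> decoys" by (auto simp: decoys_def)
  show "\<not> (card ?G < k \<and> (\<exists>e\<in>optimum \<union> decoys - ?G. c (Suc l) / real k \<le> marg hard_fun ?G e))"
  proof
    assume "card ?G < k \<and> (\<exists>e\<in>optimum \<union> decoys - ?G. c (Suc l) / real k \<le> marg hard_fun ?G e)"
    then obtain e where budget: "taken (Suc l) < k" and e: "e \<in> optimum \<union> decoys" "e \<notin> ?G"
      and gain: "c (Suc l) / real k \<le> marg hard_fun ?G e" by auto
    have "marg hard_fun ?G e < c (Suc l) / real k"
    proof (cases "e \<in> optimum")
      case True
      have "sum decoy_weight (?G \<inter> decoys) = taken_weight (Suc l)"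
        using G_decoys sum_decoy_weight[of "Suc l"] by (simp add: Int_absorb2)
      then show ?thesis using True e weight_blocks_phase[OF budget] k_ge_2
        by (simp add: hard_fun_def hard.marg_opt card_optimum divide_strict_right_mono)
    next
      case False
      then have "e \<in> decoys" using e by simp
      then have "marg hard_fun ?G e = decoy_weight e"
        using e prefix_inter_optimum[OF taken_le] hard.marg_decoy[of e ?G] by (simp add: hard_fun_def)
      also have "\<dots> < c (Suc l) / real k"
        using \<open>e \<in> decoys\<close> e later_decoys_lighter[OF budget, of e] by (simp add: decoys_def)
      finally show ?thesis .
    qed
    with gain show False by simp
  qed
qed (use assms in simp_all)

lemma execution_reaches_phase:
  assumes "l \<le> t"
  shows "(thr_step (optimum \<union> decoys) hard_fun k t (\<lambda>l. c l / real k))\<^sup>*\<^sup>* (1, {}) (Suc l, {..<taken l})"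
proof -
  let ?R = "thr_step (optimum \<union> decoys) hard_fun k t (\<lambda>l. c l / real k)"
  have phase_run: "?R\<^sup>*\<^sup>* (Suc m, {..<taken m}) (Suc (Suc m), {..<taken (Suc m)})" if "m < l" for m
  proof -
    have "?R\<^sup>*\<^sup>* (Suc m, {..<taken m}) (Suc m, {..<taken (Suc m)})"
      using that assms add_step[of m] taken_mono[of m "Suc m"]
      by (intro rtranclp_chain[where s = "\<lambda>p. (Suc m, {..<p})"]) simp_all
    then show ?thesis
      using advance_step[of m] that assms by (simp add: rtranclp.rtrancl_into_rtrancl)
  qed
  have "?R\<^sup>*\<^sup>*\<^sup>*\<^sup>* (Suc 0, {..<taken 0}) (Suc l, {..<taken l})"
    by (rule rtranclp_chain[where s = "\<lambda>m. (Suc m, {..<taken m})"]) (simp_all add: phase_run)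
  then show ?thesis by simp
qed

lemma hard_instance:
  obtains V :: "nat set" and f :: "nat set \<Rightarrow> real" and G
  where "finite V" "nonneg_set_fun V f" "monotone_sf V f" "submodular V f" "opt_val V f k = 1"
    "thr_output V f k t (\<lambda>l. c l / real k) G"
    "f G \<le> 1 - 1 / (1 + real k / ((real k - 1) * t)) ^ t"
proof (rule that)
  show "finite (optimum \<union> decoys)" using hard.finite_P hard.finite_D by simp
  show "nonneg_set_fun (optimum \<union> decoys) hard_fun" "monotone_sf (optimum \<union> decoys) hard_fun"
    "submodular (optimum \<union> decoys) hard_fun"
    unfolding hard_fun_def by (rule hard.nonneg hard.monotone hard.submodular)+
  show "opt_val (optimum \<union> decoys) hard_fun k = 1"
    using hard.opt_val_eq_1 by (simp add: hard_fun_def card_optimum)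
  show "thr_output (optimum \<union> decoys) hard_fun k t (\<lambda>l. c l / real k) decoys"
    using execution_reaches_phase[of t] by (simp add: thr_output_def decoys_def)
  have "hard_fun decoys = taken_weight t"
    using prefix_inter_optimum[of "taken t"] sum_decoy_weight[of t]
    by (simp add: hard_fun_def decoy_fun_def decoys_def)
  then show "hard_fun decoys \<le> 1 - 1 / (1 + real k / ((real k - 1) * t)) ^ t"
    using taken_weight_bound by simp
qed

end

lemma antitone_ge_last:
  fixes c :: "nat \<Rightarrow> real"
  assumes "\<forall>l. 1 \<le> l \<and> l < t \<longrightarrow> c (Suc l) \<le> c l" and "1 \<le> l" and "l \<le> t"
  shows "c t \<le> c l"
  using assms(3,2)
proof (induction l rule: inc_induct)
  case (step l)
  then show ?case using assms(1) by force
qed simp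

lemma output_bound_limit:
  assumes "1 \<le> t"
  shows "(\<lambda>k. 1 - 1 / (1 + real k / ((real k - 1) * t)) ^ t) \<longlonglongrightarrow> 1 - (1 - 1 / real (t + 1)) ^ t"
proof -
  have "(\<lambda>k. real k / (real k - 1)) \<longlonglongrightarrow> 1" by real_asymp
  then have "(\<lambda>k. 1 - 1 / (1 + real k / (real k - 1) / t) ^ t) \<longlonglongrightarrow> 1 - 1 / (1 + 1 / t) ^ t"
    using assms by (intro tendsto_intros) (auto simp: add_nonneg_eq_0_iff)
  moreover have "1 / (1 + 1 / real t) ^ t = (1 - 1 / real (t + 1)) ^ t"
    unfolding power_one_over using assms by (simp add: field_simps)
  ultimately show ?thesis by simp
qed

theorem theorem4:
  fixes t :: nat and \<epsilon> :: real
  assumes "t \<ge> 1" and "\<epsilon> > 0"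
  shows "\<exists>k0::nat. \<forall>k\<ge>k0. \<forall>c :: nat \<Rightarrow> real.
     (\<forall>l. 1 \<le> l \<and> l < t \<longrightarrow> c (Suc l) \<le> c l) \<and> c t > 0 \<longrightarrow>
     (\<exists>(V :: nat set) (f :: nat set \<Rightarrow> real).
        finite V \<and> nonneg_set_fun V f \<and> monotone_sf V f \<and> submodular V f \<and>
        opt_val V f k > 0 \<and>
        (\<exists>G. thr_output V f k t (\<lambda>l. c l * opt_val V f k / real k) G \<and>
             f G \<le> (1 - (1 - 1 / real (t + 1)) ^ t + \<epsilon>) * opt_val V f k))"
proof -
  obtain K where K: "\<And>k. K \<le> k \<Longrightarrow>
      1 - 1 / (1 + real k / ((real k - 1) * t)) ^ t < 1 - (1 - 1 / real (t + 1)) ^ t + \<epsilon>"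
    using order_tendstoD(2)[OF output_bound_limit[OF assms(1)]] assms(2)
    unfolding eventually_sequentially by (metis less_add_same_cancel1)
  show ?thesis
  proof (intro exI[of _ "max 2 K"] allI impI)
    fix k :: nat and c :: "nat \<Rightarrow> real"
    assume k: "max 2 K \<le> k" and c: "(\<forall>l. 1 \<le> l \<and> l < t \<longrightarrow> c (Suc l) \<le> c l) \<and> 0 < c t"
    interpret threshold_schedule c k t
      using k c antitone_ge_last[of t c] by unfold_locales force+
    obtain V :: "nat set" and f G
      where "finite V" "nonneg_set_fun V f" "monotone_sf V f" "submodular V f" "opt_val V f k = 1" "thr_output V f k t (\<lambda>l. c l / real k) G"
      "f G \<le> 1 - 1 / (1 + real k / ((real k - 1) * t)) ^ t"
      by (rule hard_instance)
    with K[of k] k show "\<exists>(V :: nat set) f. finite V \<and> nonneg_set_fun V f \<and> monotone_sf V f \<and>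
        submodular V f \<and> opt_val V f k > 0 \<and>
        (\<exists>G. thr_output V f k t (\<lambda>l. c l * opt_val V f k / real k) G \<and>
             f G \<le> (1 - (1 - 1 / real (t + 1)) ^ t + \<epsilon>) * opt_val V f k)"
      by (intro exI[of _ V] exI[of _ f]) auto
  qed
qed

end
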